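(* Let $G$ be a finitely generated group with arbitrarily large finite quotients, and let $n$ be a positive integer. Then $G$ has a finite generating set $A$ such that the depth of $G$ with respect to $A$ is at least $n$.
   Context: A group $G$ has arbitrarily large finite quotients if for every integer $m$ there is a surjective homomorphism from $G$ onto a finite group of order at least $m$. For a finite generating set $A$ of $G$, let $d_A$ denote the word metric on $G$ induced by $A$ (equivalently, the path metric in the Cayley graph of $G$ with respect to $A$). The (dead-end) depth of an element $g\in G$ with respect to $A$ is the $d_A$-distance from $g$ to the complement of the closed ball $\{x\in G : d_A(1,x)\le d_A(1,g)\}$, i.e. the distance from $g$ to the nearest element $x$ with $d_A(1,x)>d_A(1,g)$. The depth of $G$ with respect to $A$ is the (possibly infinite) supremum of the depths of all elements of $G$ with respect to $A$. *)

theory Defs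
  imports "HOL-Algebra.Algebra" "HOL-Library.Extended_Nat"
begin

definition word_length :: "('a, 'b) monoid_scheme \<Rightarrow> 'a set \<Rightarrow> 'a \<Rightarrow> nat" where
  "word_length G A g =
     (LEAST k. \<exists>xs. length xs = k \<and> set xs \<subseteq> A \<union> m_inv G ` A
                    \<and> foldr (monoid.mult G) xs (monoid.one G) = g)"

definition word_dist :: "('a, 'b) monoid_scheme \<Rightarrow> 'a set \<Rightarrow> 'a \<Rightarrow> 'a \<Rightarrow> nat" where
  "word_dist G A x y = word_length G A (inv\<^bsub>G\<^esub> x \<otimes>\<^bsub>G\<^esub> y)"

text \<open>Dead-end depth of g: distance from g to the set of elements strictly farther
  from the identity (infinite if there is none).\<close>
definition elem_depth :: "('a, 'b) monoid_scheme \<Rightarrow> 'a set \<Rightarrow> 'a \<Rightarrow> enat" where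
  "elem_depth G A g =
     (INF x \<in> {x \<in> carrier G. word_length G A x > word_length G A g}.
        enat (word_dist G A g x))"

definition group_depth :: "('a, 'b) monoid_scheme \<Rightarrow> 'a set \<Rightarrow> enat" where
  "group_depth G A = (SUP g \<in> carrier G. elem_depth G A g)"

definition finite_gen_set :: "('a, 'b) monoid_scheme \<Rightarrow> 'a set \<Rightarrow> bool" where
  "finite_gen_set G A \<longleftrightarrow> finite A \<and> A \<subseteq> carrier G \<and> generate G A = carrier G"

definition finitely_generated :: "('a, 'b) monoid_scheme \<Rightarrow> bool" where
  "finitely_generated G \<longleftrightarrow> (\<exists>A. finite_gen_set G A)"

text \<open>Every quotient of G is isomorphic to a group
  with carrier of type 'a set (namely G Mod N), so quantifying over target groups
  of type 'a set monoid loses nothing.\<close>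
definition arb_large_finite_quotients :: "('a, 'b) monoid_scheme \<Rightarrow> bool" where
  "arb_large_finite_quotients G \<longleftrightarrow>
     (\<forall>m::nat. \<exists>(H :: 'a set monoid) h. group H \<and> h \<in> hom G H \<and> h ` carrier G = carrier H
        \<and> finite (carrier H) \<and> card (carrier H) \<ge> m)"

end

theory Submission
  imports Defs
begin

(* Fix a finite symmetric generating set U of G containing 1, so that prods G U k is the U-ball
   of radius k, and a finite quotient h : G -> H with |H| > |U|^(n-1). Then the diameter D of H
   with respect to h(U) is at least n, and every element of H lifts into the U-ball of some
   radius c. The new generators are the elements a of the U-ball of radius K + 2c with h(a) in
   h(U), where K = 2nc + 1. By induction on d, an element of the U-ball of radius dK + c whose
   image lies in the h(U)-ball of radius d is a product of d new generators: split off a tail of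
   U-length K + c and correct it by a lift of length c. Hence the new length is at most D on the
   U-ball of radius DK, while a lift g of a point of H at distance D from 1 has new length at
   least D, because h maps the new generators into h(U). Every element within new distance n of
   g lies in the U-ball of radius DK, so none of them is longer than g. *)

definition prods :: "('a, 'b) monoid_scheme \<Rightarrow> 'a set \<Rightarrow> nat \<Rightarrow> 'a set" where
  "prods G U k = {foldr (\<otimes>\<^bsub>G\<^esub>) xs \<one>\<^bsub>G\<^esub> | xs. length xs = k \<and> set xs \<subseteq> U}"

lemma prodsI: "length xs = k \<Longrightarrow> set xs \<subseteq> U \<Longrightarrow> foldr (\<otimes>\<^bsub>G\<^esub>) xs \<one>\<^bsub>G\<^esub> \<in> prods G U k"
  unfolding prods_def by blast

lemma prodsE:
  assumes "x \<in> prods G U k"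
  obtains xs where "x = foldr (\<otimes>\<^bsub>G\<^esub>) xs \<one>\<^bsub>G\<^esub>" "length xs = k" "set xs \<subseteq> U"
  using assms unfolding prods_def by blast

lemma prods_0 [simp]: "prods G U 0 = {\<one>\<^bsub>G\<^esub>}"
  unfolding prods_def by auto

lemma prods_mono_set: "U \<subseteq> V \<Longrightarrow> prods G U k \<subseteq> prods G V k"
  unfolding prods_def by blast

lemma prods_eq_image: "prods G U k = (\<lambda>xs. foldr (\<otimes>\<^bsub>G\<^esub>) xs \<one>\<^bsub>G\<^esub>) ` {xs. set xs \<subseteq> U \<and> length xs = k}"
  unfolding prods_def by auto

lemma finite_prods: "finite U \<Longrightarrow> finite (prods G U k)"
  unfolding prods_eq_image by (simp add: finite_lists_length_eq)

lemma card_prods_le: "finite U \<Longrightarrow> card (prods G U k) \<le> card U ^ k"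
proof -
  assume "finite U"
  then have "card (prods G U k) \<le> card {xs. set xs \<subseteq> U \<and> length xs = k}"
    unfolding prods_eq_image by (intro card_image_le) (simp add: finite_lists_length_eq)
  then show ?thesis
    using card_lists_length_eq[OF \<open>finite U\<close>] by simp
qed

context monoid
begin

lemma multlist_append:
  "set xs \<subseteq> carrier G \<Longrightarrow> set ys \<subseteq> carrier G \<Longrightarrow>
   foldr (\<otimes>) (xs @ ys) \<one> = foldr (\<otimes>) xs \<one> \<otimes> foldr (\<otimes>) ys \<one>"
  by (induction xs) (auto simp: m_assoc)

lemma prods_closed: "U \<subseteq> carrier G \<Longrightarrow> prods G U k \<subseteq> carrier G"
  by (auto elim!: prodsE)

lemma prods_1 [simp]: "U \<subseteq> carrier G \<Longrightarrow> prods G U (Suc 0) = U"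
proof
  show "U \<subseteq> carrier G \<Longrightarrow> prods G U (Suc 0) \<subseteq> U"
    unfolding prods_def by (auto simp: length_Suc_conv)
  show "U \<subseteq> prods G U (Suc 0)" if "U \<subseteq> carrier G"
  proof
    fix u assume "u \<in> U"
    then show "u \<in> prods G U (Suc 0)"
      using prodsI[of "[u]" 1 U G] subsetD[OF that] by simp
  qed
qed

lemma prods_mult:
  assumes "U \<subseteq> carrier G" "x \<in> prods G U a" "y \<in> prods G U b"
  shows "x \<otimes> y \<in> prods G U (a + b)"
proof -
  obtain xs ys where "x = foldr (\<otimes>) xs \<one>" "length xs = a" "set xs \<subseteq> U"
    and "y = foldr (\<otimes>) ys \<one>" "length ys = b" "set ys \<subseteq> U"
    using assms(2,3) by (elim prodsE)
  then show ?thesis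
    using assms(1) multlist_append[of xs ys] prodsI[of "xs @ ys" "a + b" U G] by auto
qed

lemma prods_add_split:
  assumes "U \<subseteq> carrier G" "z \<in> prods G U (a + b)"
  obtains x y where "x \<in> prods G U a" "y \<in> prods G U b" "z = x \<otimes> y"
proof -
  obtain zs where zs: "z = foldr (\<otimes>) zs \<one>" "length zs = a + b" "set zs \<subseteq> U"
    using assms(2) by (elim prodsE)
  have sub: "set (take a zs) \<subseteq> U" "set (drop a zs) \<subseteq> U"
    using zs(3) set_take_subset set_drop_subset by fast+
  have "z = foldr (\<otimes>) (take a zs) \<one> \<otimes> foldr (\<otimes>) (drop a zs) \<one>"
    using multlist_append[of "take a zs" "drop a zs"] sub assms(1) zs(1) by auto
  then show thesis
    using that prodsI[of "take a zs" a U G] prodsI[of "drop a zs" b U G] sub zs(2) by simp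
qed

lemma one_in_prods:
  assumes "U \<subseteq> carrier G" "\<one> \<in> U"
  shows "\<one> \<in> prods G U k"
proof (induction k)
  case (Suc k)
  then show ?case
    using prods_mult[OF assms(1), of \<one> 1 \<one> k] assms by simp
qed simp

lemma prods_mono:
  assumes "U \<subseteq> carrier G" "\<one> \<in> U" "a \<le> b"
  shows "prods G U a \<subseteq> prods G U b"
proof
  fix x assume x: "x \<in> prods G U a"
  then have "x \<otimes> \<one> \<in> prods G U (a + (b - a))"
    using prods_mult[OF assms(1) x one_in_prods[OF assms(1,2)]] by blast
  then show "x \<in> prods G U b"
    using x prods_closed[OF assms(1)] assms(3) by force
qed

lemma prods_prods:
  assumes "U \<subseteq> carrier G"
  shows "prods G (prods G U r) m \<subseteq> prods G U (m * r)"
proof (induction m)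
  case (Suc m)
  show ?case
  proof
    fix x assume "x \<in> prods G (prods G U r) (Suc m)"
    then have "x \<in> prods G (prods G U r) (Suc 0 + m)"
      by simp
    then obtain y z where "y \<in> prods G (prods G U r) (Suc 0)" "z \<in> prods G (prods G U r) m"
      and "x = y \<otimes> z"
      by (rule prods_add_split[OF prods_closed[OF assms]])
    then show "x \<in> prods G U (Suc m * r)"
      using prods_mult[OF assms] prods_closed[OF assms] Suc.IH by auto
  qed
qed simp

end

context group
begin

lemma multlist_inv:
  "set xs \<subseteq> carrier G \<Longrightarrow> inv (foldr (\<otimes>) xs \<one>) = foldr (\<otimes>) (rev (map (m_inv G) xs)) \<one>"
proof (induction xs)
  case (Cons x xs)
  then have "inv (foldr (\<otimes>) (x # xs) \<one>) = inv (foldr (\<otimes>) xs \<one>) \<otimes> inv x"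
    by (simp add: inv_mult_group)
  also have "\<dots> = foldr (\<otimes>) (rev (map (m_inv G) xs) @ [inv x]) \<one>"
    using Cons by (subst multlist_append) auto
  finally show ?case
    by simp
qed simp

lemma prods_inv:
  assumes "U \<subseteq> carrier G" "\<And>u. u \<in> U \<Longrightarrow> inv u \<in> U" "x \<in> prods G U k"
  shows "inv x \<in> prods G U k"
proof -
  obtain xs where "x = foldr (\<otimes>) xs \<one>" "length xs = k" "set xs \<subseteq> U"
    using assms(3) by (elim prodsE)
  then show ?thesis
    using multlist_inv[of xs] prodsI[of "rev (map (m_inv G) xs)" k U G] assms(1,2) by auto
qed

lemma generate_subset_prods:
  assumes "U \<subseteq> carrier G"
  shows "generate G U \<subseteq> (\<Union>k. prods G (U \<union> m_inv G ` U) k)"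
proof
  have alphabet: "U \<union> m_inv G ` U \<subseteq> carrier G"
    using assms by auto
  fix x assume "x \<in> generate G U"
  then show "x \<in> (\<Union>k. prods G (U \<union> m_inv G ` U) k)"
  proof (induction rule: generate.induct)
    case one
    have "\<one> \<in> prods G (U \<union> m_inv G ` U) 0"
      by simp
    then show ?case
      by blast
  next
    case (incl u)
    then have "u \<in> prods G (U \<union> m_inv G ` U) (Suc 0)"
      using alphabet by simp
    then show ?case
      by blast
  next
    case (inv u)
    then have "inv u \<in> prods G (U \<union> m_inv G ` U) (Suc 0)"
      using alphabet by simp
    then show ?case
      by blast
  next
    case (eng x y)
    then obtain a b where "x \<in> prods G (U \<union> m_inv G ` U) a" "y \<in> prods G (U \<union> m_inv G ` U) b"
      by blast
    then have "x \<otimes> y \<in> prods G (U \<union> m_inv G ` U) (a + b)"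
      by (rule prods_mult[OF alphabet])
    then show ?case
      by blast
  qed
qed

end

lemma (in group) carrier_subset_prods:
  assumes "U \<subseteq> carrier G" "\<And>u. u \<in> U \<Longrightarrow> inv u \<in> U" "generate G U = carrier G"
  shows "carrier G \<subseteq> (\<Union>k. prods G U k)"
proof -
  have "U \<union> m_inv G ` U = U"
    using assms(2) by blast
  then show ?thesis
    using generate_subset_prods[OF assms(1)] assms(3) by simp
qed

lemma (in group) symmetric_generating_set:
  assumes "finitely_generated G"
  obtains U where "finite U" "U \<subseteq> carrier G" "\<one> \<in> U" "\<And>u. u \<in> U \<Longrightarrow> inv u \<in> U"
    and "generate G U = carrier G"
proof -
  obtain S where S: "finite S" "S \<subseteq> carrier G" "generate G S = carrier G"
    using assms unfolding finitely_generated_def finite_gen_set_def by blast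
  define U where "U = S \<union> m_inv G ` S \<union> {\<one>}"
  have "U \<subseteq> carrier G"
    using S(2) unfolding U_def by auto
  moreover have "generate G U = carrier G"
    using mono_generate[of S U] generate_incl[OF \<open>U \<subseteq> carrier G\<close>] S(3) unfolding U_def by blast
  moreover have "finite U" "\<one> \<in> U" "\<And>u. u \<in> U \<Longrightarrow> inv u \<in> U"
    using S unfolding U_def by auto
  ultimately show thesis
    using that by blast
qed

lemma (in group_hom) hom_multlist:
  "set xs \<subseteq> carrier G \<Longrightarrow> h (foldr (\<otimes>\<^bsub>G\<^esub>) xs \<one>\<^bsub>G\<^esub>) = foldr (\<otimes>\<^bsub>H\<^esub>) (map h xs) \<one>\<^bsub>H\<^esub>"
  by (induction xs) (auto simp: G.multlist_closed)

lemma (in group_hom) image_prods: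
  assumes "U \<subseteq> carrier G"
  shows "h ` prods G U k \<subseteq> prods H (h ` U) k"
proof
  fix y assume "y \<in> h ` prods G U k"
  then obtain xs where "y = h (foldr (\<otimes>\<^bsub>G\<^esub>) xs \<one>\<^bsub>G\<^esub>)" "length xs = k" "set xs \<subseteq> U"
    by (auto elim: prodsE)
  then show "y \<in> prods H (h ` U) k"
    using hom_multlist[of xs] prodsI[of "map h xs" k "h ` U" H] assms by auto
qed

lemma (in group_hom) finite_image_prods:
  assumes "finite (carrier H)" "h ` carrier G = carrier H"
    and "U \<subseteq> carrier G" "\<one> \<in> U" "carrier G \<subseteq> (\<Union>k. prods G U k)"
  obtains c where "carrier H \<subseteq> h ` prods G U c"
proof -
  have mono: "h ` prods G U a \<subseteq> h ` prods G U b" if "a \<le> b" for a b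
    using G.prods_mono[OF assms(3,4) that] by (rule image_mono)
  have "carrier H \<subseteq> \<Union> (range (\<lambda>k. h ` prods G U k))"
    using assms(2,5) by blast
  moreover have "subset.chain UNIV (range (\<lambda>k. h ` prods G U k))"
    unfolding subset_chain_def
  proof (intro conjI subset_UNIV ballI)
    fix V W assume "V \<in> range (\<lambda>k. h ` prods G U k)" "W \<in> range (\<lambda>k. h ` prods G U k)"
    then obtain a b where "V = h ` prods G U a" "W = h ` prods G U b"
      by blast
    then show "V \<subseteq> W \<or> W \<subseteq> V"
      using mono nat_le_linear[of a b] by blast
  qed
  ultimately show thesis
    using finite_subset_Union_chain[OF assms(1)] that by blast
qed

lemma word_length_le:
  "y \<in> prods G (A \<union> m_inv G ` A) k \<Longrightarrow> word_length G A y \<le> k"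
  unfolding word_length_def by (rule Least_le) (auto elim: prodsE)

lemma (in group) prods_word_length:
  assumes "A \<subseteq> carrier G" "y \<in> generate G A"
  shows "y \<in> prods G (A \<union> m_inv G ` A) (word_length G A y)"
proof -
  have "\<exists>k xs. length xs = k \<and> set xs \<subseteq> A \<union> m_inv G ` A \<and> foldr (\<otimes>) xs \<one> = y"
    using generate_subset_prods[OF assms(1)] assms(2) unfolding prods_def by blast
  from LeastI_ex[OF this] show ?thesis
    unfolding word_length_def prods_def by blast
qed

lemma (in group) group_depth_geI:
  assumes "g \<in> carrier G"
    and "\<And>y. y \<in> carrier G \<Longrightarrow> word_length G A y < n \<Longrightarrow>
           word_length G A (g \<otimes> y) \<le> word_length G A g"
  shows "enat n \<le> group_depth G A"
proof -
  have "enat n \<le> enat (word_dist G A g x)"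
    if "x \<in> carrier G" "word_length G A g < word_length G A x" for x
  proof (rule ccontr)
    assume "\<not> enat n \<le> enat (word_dist G A g x)"
    then have "word_length G A (inv g \<otimes> x) < n"
      unfolding word_dist_def by simp
    then have "word_length G A (g \<otimes> (inv g \<otimes> x)) \<le> word_length G A g"
      using assms that by simp
    then show False
      using assms(1) that by (simp add: m_assoc[symmetric])
  qed
  then have "enat n \<le> elem_depth G A g"
    unfolding elem_depth_def by (auto intro: INF_greatest)
  also have "\<dots> \<le> group_depth G A"
    unfolding group_depth_def using assms(1) by (rule SUP_upper)
  finally show ?thesis .
qed

locale quotient_lifting = group_hom G H h for G (structure) and H (structure) and h +
  fixes U and c :: nat
  assumes U_closed: "U \<subseteq> carrier G" and one_in_U: "\<one> \<in> U"
    and inv_in_U: "u \<in> U \<Longrightarrow> inv u \<in> U"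
    and generate_U: "generate G U = carrier G"
    and onto_prods: "carrier H \<subseteq> h ` prods G U c"
begin

definition diam :: nat where
  "diam = (LEAST k. prods H (h ` U) k = carrier H)"

definition lift_gens where
  "lift_gens K = {a \<in> prods G U (K + 2 * c). h a \<in> h ` U}"

lemma image_U_closed: "h ` U \<subseteq> carrier H"
  using U_closed by auto

lemma one_in_image_U: "\<one>\<^bsub>H\<^esub> \<in> h ` U"
  using image_eqI[of _ h \<one>] one_in_U by simp

lemma prods_diam: "prods H (h ` U) diam = carrier H"
proof -
  have "prods H (h ` U) c = carrier H"
    using onto_prods image_prods[OF U_closed, of c] H.prods_closed[OF image_U_closed] by blast
  then show ?thesis
    unfolding diam_def by (rule LeastI)
qed

lemma less_diam:
  assumes "finite U" "card U ^ k < card (carrier H)"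
  shows "k < diam"
proof (rule ccontr)
  assume "\<not> k < diam"
  then have "carrier H \<subseteq> prods H (h ` U) k"
    using H.prods_mono[OF image_U_closed one_in_image_U, of diam k] prods_diam by simp
  then have "card (carrier H) \<le> card (prods H (h ` U) k)"
    using finite_prods[of "h ` U"] assms(1) by (intro card_mono) auto
  also have "\<dots> \<le> card (h ` U) ^ k"
    using card_prods_le assms(1) by blast
  also have "\<dots> \<le> card U ^ k"
    using card_image_le[OF assms(1)] by (rule power_mono) simp
  finally show False
    using assms(2) by simp
qed

lemma far_element:
  assumes "0 < diam"
  obtains g where "g \<in> prods G U c" "h g \<notin> prods H (h ` U) (diam - 1)"
proof -
  have "prods H (h ` U) (diam - 1) \<noteq> carrier H"
    using not_less_Least[of "diam - 1" "\<lambda>k. prods H (h ` U) k = carrier H"] assms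
    unfolding diam_def by simp
  then obtain q where "q \<in> carrier H" "q \<notin> prods H (h ` U) (diam - 1)"
    using H.prods_closed[OF image_U_closed] by blast
  then show thesis
    using onto_prods that by blast
qed

lemma lift_gens_subset: "lift_gens K \<subseteq> prods G U (K + 2 * c)"
  unfolding lift_gens_def by blast

lemma lift_gens_closed: "lift_gens K \<subseteq> carrier G"
  using lift_gens_subset G.prods_closed[OF U_closed] by blast

lemma U_subset_lift_gens:
  assumes "0 < K"
  shows "U \<subseteq> lift_gens K"
proof
  fix u assume "u \<in> U"
  then have "u \<in> prods G U (K + 2 * c)"
    using G.prods_mono[OF U_closed one_in_U, of "Suc 0" "K + 2 * c"] U_closed assms by auto
  then show "u \<in> lift_gens K"
    using \<open>u \<in> U\<close> unfolding lift_gens_def by blast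
qed

lemma generate_lift_gens: "0 < K \<Longrightarrow> generate G (lift_gens K) = carrier G"
  using G.mono_generate[OF U_subset_lift_gens] G.generate_incl[OF lift_gens_closed] generate_U
  by blast

lemma finite_gen_set_lift_gens: "finite U \<Longrightarrow> 0 < K \<Longrightarrow> finite_gen_set G (lift_gens K)"
  unfolding finite_gen_set_def
  using finite_subset[OF lift_gens_subset finite_prods] lift_gens_closed generate_lift_gens
  by blast

lemma image_lift_gens: "h ` (lift_gens K \<union> m_inv G ` lift_gens K) \<subseteq> h ` U"
proof -
  have "h (inv a) \<in> h ` U" if a: "a \<in> lift_gens K" for a
  proof -
    obtain u where "u \<in> U" "h a = h u"
      using a unfolding lift_gens_def by blast
    moreover have "a \<in> carrier G" "u \<in> carrier G"
      using a \<open>u \<in> U\<close> lift_gens_closed U_closed by blast+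
    ultimately have "h (inv a) = h (inv u)"
      by simp
    then show ?thesis
      using inv_in_U[OF \<open>u \<in> U\<close>] by blast
  qed
  then show ?thesis
    unfolding lift_gens_def by blast
qed

lemma lift_gens_correction:
  assumes "x \<in> carrier G" "z \<in> prods G U (K + c)" "v \<in> carrier H"
    and "inv\<^bsub>H\<^esub> v \<otimes>\<^bsub>H\<^esub> h (x \<otimes> z) \<in> h ` U"
  obtains e where "e \<in> prods G U c" "h (x \<otimes> e) = v" "inv e \<otimes> z \<in> lift_gens K"
proof -
  have zG: "z \<in> carrier G"
    using assms(2) G.prods_closed[OF U_closed] by blast
  obtain e where e: "e \<in> prods G U c" and he: "h e = inv\<^bsub>H\<^esub> h x \<otimes>\<^bsub>H\<^esub> v"
    using onto_prods assms(1,3) by (metis H.inv_closed H.m_closed hom_closed imageE subsetD)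
  have eG: "e \<in> carrier G"
    using e G.prods_closed[OF U_closed] by blast
  have "h (x \<otimes> e) = v"
    using he assms(1,3) eG by (simp add: H.m_assoc[symmetric])
  moreover have "h (inv e \<otimes> z) = inv\<^bsub>H\<^esub> v \<otimes>\<^bsub>H\<^esub> h (x \<otimes> z)"
    using he assms(1,3) eG zG by (simp add: H.inv_mult_group H.m_assoc)
  moreover have "inv e \<otimes> z \<in> prods G U (c + (K + c))"
    using G.prods_mult[OF U_closed G.prods_inv[OF U_closed inv_in_U e] assms(2)] .
  then have "inv e \<otimes> z \<in> prods G U (K + 2 * c)"
    by (simp add: mult_2 add.left_commute)
  ultimately show thesis
    using that[OF e] assms(4) unfolding lift_gens_def by simp
qed

lemma prods_lift_gens:
  assumes "y \<in> prods G U (Suc d * K + c)" "h y \<in> prods H (h ` U) (Suc d)"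
  shows "y \<in> prods G (lift_gens K) (Suc d)"
  using assms
proof (induction d arbitrary: y)
  case 0
  then have "y \<in> prods G U (K + 2 * c)"
    using G.prods_mono[OF U_closed one_in_U, of "K + c" "K + 2 * c"] by auto
  moreover have "h y \<in> h ` U"
    using 0(2) image_U_closed by simp
  ultimately show ?case
    using lift_gens_closed unfolding lift_gens_def by simp
next
  case (Suc d)
  have "y \<in> prods G U (Suc d * K + (K + c))"
    using Suc.prems(1) by (simp add: algebra_simps)
  then obtain x z where x: "x \<in> prods G U (Suc d * K)" and z: "z \<in> prods G U (K + c)"
    and y: "y = x \<otimes> z"
    by (rule G.prods_add_split[OF U_closed])
  have "h y \<in> prods H (h ` U) (Suc d + Suc 0)"
    using Suc.prems(2) by simp
  then obtain v t where v: "v \<in> prods H (h ` U) (Suc d)" and "t \<in> prods H (h ` U) (Suc 0)"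
    and hy: "h y = v \<otimes>\<^bsub>H\<^esub> t"
    by (rule H.prods_add_split[OF image_U_closed])
  then have t: "t \<in> h ` U"
    using image_U_closed by simp
  have carrier: "x \<in> carrier G" "z \<in> carrier G" "v \<in> carrier H"
    using x z v G.prods_closed[OF U_closed] H.prods_closed[OF image_U_closed] by blast+
  moreover have "inv\<^bsub>H\<^esub> v \<otimes>\<^bsub>H\<^esub> h (x \<otimes> z) \<in> h ` U"
    using hy y t carrier image_U_closed by (auto simp: H.m_assoc[symmetric])
  ultimately obtain e where e: "e \<in> prods G U c" "h (x \<otimes> e) = v"
    and a: "inv e \<otimes> z \<in> lift_gens K"
    using lift_gens_correction z by blast
  have eG: "e \<in> carrier G"
    using e(1) G.prods_closed[OF U_closed] by blast
  have "e \<otimes> (inv e \<otimes> z) = z"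
    using carrier eG by (simp add: G.m_assoc[symmetric])
  then have "y = (x \<otimes> e) \<otimes> (inv e \<otimes> z)"
    unfolding y using carrier eG by (simp add: G.m_assoc)
  moreover have "x \<otimes> e \<in> prods G (lift_gens K) (Suc d)"
    using Suc.IH G.prods_mult[OF U_closed x e(1)] e(2) v by simp
  moreover have "inv e \<otimes> z \<in> prods G (lift_gens K) (Suc 0)"
    using a lift_gens_closed by simp
  ultimately show ?case
    using G.prods_mult[OF lift_gens_closed] by fastforce
qed

lemma word_length_le_diam:
  assumes "0 < diam" "x \<in> prods G U (diam * K)"
  shows "word_length G (lift_gens K) x \<le> diam"
proof -
  obtain d where d: "diam = Suc d"
    using assms(1) gr0_implies_Suc by blast
  have "x \<in> prods G U (diam * K + c)"
    using G.prods_mono[OF U_closed one_in_U, of "diam * K" "diam * K + c"] assms(2) by auto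
  moreover have "h x \<in> prods H (h ` U) diam"
    using prods_diam assms(2) G.prods_closed[OF U_closed] hom_closed by blast
  ultimately have "x \<in> prods G (lift_gens K) diam"
    using prods_lift_gens d by simp
  then have "x \<in> prods G (lift_gens K \<union> m_inv G ` lift_gens K) diam"
    using prods_mono_set[of "lift_gens K" "lift_gens K \<union> m_inv G ` lift_gens K"] by blast
  then show ?thesis
    by (rule word_length_le)
qed

lemma diam_le_word_length:
  assumes "0 < K" "g \<in> carrier G" "h g \<notin> prods H (h ` U) (diam - 1)"
  shows "diam \<le> word_length G (lift_gens K) g"
proof (rule ccontr)
  let ?A = "lift_gens K"
  assume "\<not> diam \<le> word_length G ?A g"
  have "?A \<union> m_inv G ` ?A \<subseteq> carrier G"
    using lift_gens_closed by auto
  moreover have "g \<in> prods G (?A \<union> m_inv G ` ?A) (word_length G ?A g)"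
    using G.prods_word_length[OF lift_gens_closed] generate_lift_gens[OF assms(1)] assms(2)
    by simp
  ultimately have "h g \<in> prods H (h ` (?A \<union> m_inv G ` ?A)) (word_length G ?A g)"
    using image_prods by blast
  then have "h g \<in> prods H (h ` U) (word_length G ?A g)"
    using prods_mono_set[OF image_lift_gens] by blast
  moreover have "word_length G ?A g \<le> diam - 1"
    using \<open>\<not> diam \<le> _\<close> by simp
  ultimately have "h g \<in> prods H (h ` U) (diam - 1)"
    using H.prods_mono[OF image_U_closed one_in_image_U] by blast
  then show False
    using assms(3) by blast
qed

lemma group_depth_lift_gens:
  assumes "0 < n" "n \<le> diam"
  shows "enat n \<le> group_depth G (lift_gens (2 * n * c + 1))"
proof -
  define K where "K = 2 * n * c + 1"
  let ?A = "lift_gens K"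
  obtain g where g: "g \<in> prods G U c" "h g \<notin> prods H (h ` U) (diam - 1)"
    using far_element assms by auto
  then have gG: "g \<in> carrier G"
    using G.prods_closed[OF U_closed] by blast
  have "diam \<le> word_length G ?A g"
    using diam_le_word_length[OF _ gG g(2)] K_def by simp
  then have "enat n \<le> group_depth G ?A"
  proof (intro G.group_depth_geI[OF gG])
    fix y assume y: "y \<in> carrier G" "word_length G ?A y < n"
    define m where "m = word_length G ?A y"
    have "?A \<union> m_inv G ` ?A \<subseteq> prods G U (K + 2 * c)"
      using lift_gens_subset G.prods_inv[OF U_closed inv_in_U] by blast
    moreover have "y \<in> prods G (?A \<union> m_inv G ` ?A) m"
      using G.prods_word_length[OF lift_gens_closed] generate_lift_gens[of K] y(1)
      unfolding m_def K_def by simp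
    ultimately have "y \<in> prods G (prods G U (K + 2 * c)) m"
      using prods_mono_set by blast
    then have "y \<in> prods G U (m * (K + 2 * c))"
      using G.prods_prods[OF U_closed] by blast
    then have "g \<otimes> y \<in> prods G U (c + m * (K + 2 * c))"
      by (rule G.prods_mult[OF U_closed g(1)])
    moreover have "c + m * (K + 2 * c) \<le> diam * K"
    proof -
      have "(2 * m + 1) * c \<le> 2 * n * c"
        using y(2) unfolding m_def by (intro mult_right_mono) auto
      then have "c + m * (K + 2 * c) \<le> Suc m * K"
        unfolding K_def by (simp add: algebra_simps)
      also have "\<dots> \<le> diam * K"
        using y(2) assms(2) unfolding m_def by (intro mult_right_mono) auto
      finally show ?thesis .
    qed
    ultimately have "g \<otimes> y \<in> prods G U (diam * K)"
      using G.prods_mono[OF U_closed one_in_U, of "c + m * (K + 2 * c)" "diam * K"] by blast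
    then have "word_length G ?A (g \<otimes> y) \<le> diam"
      using word_length_le_diam assms by simp
    then show "word_length G ?A (g \<otimes> y) \<le> word_length G ?A g"
      using \<open>diam \<le> word_length G ?A g\<close> by linarith
  qed
  then show ?thesis
    unfolding K_def .
qed

end

theorem proposition1:
  fixes G :: "('a, 'b) monoid_scheme" and n :: nat
  assumes "group G"
    and "finitely_generated G"
    and "arb_large_finite_quotients G"
    and "n \<ge> 1"
  shows "\<exists>A. finite_gen_set G A \<and> group_depth G A \<ge> enat n"
proof -
  interpret G: group G by fact
  obtain U where U: "finite U" "U \<subseteq> carrier G" "\<one>\<^bsub>G\<^esub> \<in> U"
    "\<And>u. u \<in> U \<Longrightarrow> inv\<^bsub>G\<^esub> u \<in> U" "generate G U = carrier G"
    using G.symmetric_generating_set[OF assms(2)] by blast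
  obtain H :: "'a set monoid" and h where H: "group H" "h \<in> hom G H"
    "h ` carrier G = carrier H" "finite (carrier H)" "card (carrier H) \<ge> card U ^ (n - 1) + 1"
    using assms(3) unfolding arb_large_finite_quotients_def by meson
  interpret h: group_hom G H h
    using assms(1) H(1,2) by (simp add: group_hom_def group_hom_axioms_def)
  obtain c where "carrier H \<subseteq> h ` prods G U c"
    using h.finite_image_prods[OF H(4,3) U(2,3) G.carrier_subset_prods[OF U(2,4,5)]] .
  then interpret quotient_lifting G H h U c
    using U by unfold_locales auto
  have "n \<le> diam"
    using less_diam[OF U(1), of "n - 1"] H(5) assms(4) by simp
  then have "enat n \<le> group_depth G (lift_gens (2 * n * c + 1))"
    using group_depth_lift_gens assms(4) by simp
  moreover have "finite_gen_set G (lift_gens (2 * n * c + 1))"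
    using finite_gen_set_lift_gens[OF U(1)] by simp
  ultimately show ?thesis
    by blast
qed

end
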